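(* Let $x\in\mathcal X$ and $C_1,C_2\in\mathcal I$, and suppose the lines $\ell_{x,C_1}$ and $\ell_{x,C_2}$ intersect at some $\mu>0$. If $\ell_{x,C_1}$ has a larger intercept (value at $\mu=0$) than $\ell_{x,C_2}$, then $w(C_1)>w(C_2)$.
   Context: Let $(X,Y)\sim P_{XY}$ on $\mathcal X\times\mathcal Y$, $\alpha\in(0,1)$, $\mathcal I$ a finite collection of subsets of $\mathcal Y$, $w:\mathcal I\to(0,B)$ a bounded positive weight. For $C\in\mathcal I$ let $p_C(x)=\mathbb P(Y\in C\mid X=x)$ and $\ell_{x,C}(\mu)=w(C)p_C(x)+\mu(p_C(x)-(1-\alpha))$. *)

theory Defs
  imports "HOL-Probability.Probability"
begin

text \<open>The conditional law of Y given X = x is modelled as a Markov kernel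
  K :: 'x => 'y measure (a regular conditional distribution), so that
  p_C(x) = P(Y in C | X = x) = measure (K x) C.\<close>

definition cond_prob :: "('x \<Rightarrow> 'y measure) \<Rightarrow> 'y set \<Rightarrow> 'x \<Rightarrow> real" where
  "cond_prob K C x = measure (K x) C"

definition ell :: "('x \<Rightarrow> 'y measure) \<Rightarrow> ('y set \<Rightarrow> real) \<Rightarrow> real \<Rightarrow> 'x \<Rightarrow> 'y set \<Rightarrow> real \<Rightarrow> real" where
  "ell K w \<alpha> x C \<mu> = w C * cond_prob K C x + \<mu> * (cond_prob K C x - (1 - \<alpha>))"

end

theory Submission
  imports Defs
begin

text \<open>Two lines that cross at some \<open>\<mu> > 0\<close>, the first starting higher, must have the first
  one less steep; here the slopes are \<open>p\<^sub>C(x) - (1 - \<alpha>)\<close>, so \<open>p\<^sub>C\<^sub>1(x) < p\<^sub>C\<^sub>2(x)\<close>.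
  Then \<open>w(C\<^sub>2) p\<^sub>C\<^sub>1(x) \<le> w(C\<^sub>2) p\<^sub>C\<^sub>2(x) < w(C\<^sub>1) p\<^sub>C\<^sub>1(x)\<close>, which forces \<open>w(C\<^sub>1) > w(C\<^sub>2)\<close>.\<close>

lemma crossing_lines_slope_less:
  fixes a1 a2 b1 b2 \<mu> :: real
  assumes "\<mu> > 0" and "a1 + \<mu> * b1 = a2 + \<mu> * b2" and "a1 > a2"
  shows "b1 < b2"
proof -
  have "\<mu> * (b2 - b1) > 0"
    using assms(2,3) by (simp add: algebra_simps)
  then show ?thesis
    using assms(1) by (simp add: zero_less_mult_iff)
qed

lemma weight_less_of_weighted_less:
  fixes p1 p2 w1 w2 :: real
  assumes "0 \<le> p1" and "p1 \<le> p2" and "0 \<le> w2" and "w2 * p2 < w1 * p1"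
  shows "w2 < w1"
proof -
  have "w2 * p1 \<le> w2 * p2"
    using assms(2,3) by (rule mult_left_mono)
  with assms(4) have "w2 * p1 < w1 * p1"
    by linarith
  then show ?thesis
    using assms(1) by (rule mult_right_less_imp_less)
qed

lemma cond_prob_nonneg: "cond_prob K C x \<ge> 0"
  unfolding cond_prob_def by simp

theorem lemma4:
  fixes K :: "'x \<Rightarrow> 'y measure" and N :: "'y measure"
    and I :: "'y set set" and w :: "'y set \<Rightarrow> real"
    and \<alpha> B \<mu> :: real and x :: 'x and C1 C2 :: "'y set"
  assumes kernel: "\<And>z. prob_space (K z)" "\<And>z. sets (K z) = sets N"
    and alpha: "0 < \<alpha>" "\<alpha> < 1"
    and I_fin: "finite I" and I_meas: "I \<subseteq> sets N"
    and w_bd: "\<And>C. C \<in> I \<Longrightarrow> 0 < w C \<and> w C < B"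
    and C1: "C1 \<in> I" and C2: "C2 \<in> I"
    and mu_pos: "\<mu> > 0"
    and inter: "ell K w \<alpha> x C1 \<mu> = ell K w \<alpha> x C2 \<mu>"
    and intercept: "ell K w \<alpha> x C1 0 > ell K w \<alpha> x C2 0"
  shows "w C1 > w C2"
proof -
  define p1 where "p1 = cond_prob K C1 x"
  define p2 where "p2 = cond_prob K C2 x"
  have intercepts: "w C2 * p2 < w C1 * p1"
    using intercept unfolding ell_def p1_def p2_def by simp
  have lines: "w C1 * p1 + \<mu> * (p1 - (1 - \<alpha>)) = w C2 * p2 + \<mu> * (p2 - (1 - \<alpha>))"
    using inter unfolding ell_def p1_def p2_def .
  from mu_pos lines intercepts have "p1 - (1 - \<alpha>) < p2 - (1 - \<alpha>)"
    by (rule crossing_lines_slope_less)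
  then have "p1 \<le> p2"
    by simp
  moreover have "0 \<le> p1"
    unfolding p1_def by (rule cond_prob_nonneg)
  moreover have "0 \<le> w C2"
    using w_bd[OF C2] by simp
  ultimately show ?thesis
    using weight_less_of_weighted_less intercepts by blast
qed

end
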